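(* Let $a_1,\dots,a_k$ be non-negative integers with $\gcd(a_1,\dots,a_k)=1$, let $S=\langle a_1,\dots,a_k\rangle$ and $G(S)=\mathbb{Z}_{\geq0}\setminus S$. Let $I=\langle y_1-x^{a_1},\dots,y_k-x^{a_k}\rangle\subset\mathbb{Q}[x,y_1,\dots,y_k]$ and let $\mathcal{B}=\{g_1,\dots,g_r\}$ be the reduced Groebner basis of $I$ with respect to an elimination ordering for $x$. Let $q_i\in\mathbb{Z}_{\geq0}^{k+1}$ be the exponent of the leading monomial of $g_i$, let $K_{q_i}=q_i+\mathbb{Z}_{\geq0}^{k+1}$, and let $\overline{K_{q_i}}=\mathbb{Z}_{\geq0}^{k+1}\setminus K_{q_i}$. Let $\{x=0\}=\{(\sigma_0,\dots,\sigma_k)\in\mathbb{Z}^{k+1}_{\geq0}:\sigma_0=0\}$. Then: (1) the map $\mathcal{F}:G(S)\to\left[\bigcap_i\overline{K_{q_i}}\right]\setminus\{x=0\}$, $N\mapsto \exp(N_{\mathcal{B}}(x^N))$, is well defined and is a bijection; (2) the map $\mathcal{G}:S\to\left[\bigcap_i\overline{K_{q_i}}\right]\cap\{x=0\}$, $M\mapsto\exp(N_{\mathcal{B}}(x^M))$, is well defined and is a bijection.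
   Context: An elimination ordering for $x$ is a monomial order on $\mathbb{Q}[x,y_1,\dots,y_k]$ in which every monomial divisible by $x$ is greater than every monomial in $y_1,\dots,y_k$ only (e.g. lex with $x>y_1>\dots>y_k$). For a monomial $x^{\sigma_0}y_1^{\sigma_1}\cdots y_k^{\sigma_k}$, $\exp$ denotes its exponent vector $(\sigma_0,\sigma_1,\dots,\sigma_k)\in\mathbb{Z}^{k+1}_{\geq0}$. $N_{\mathcal{B}}(f)$ is the normal form of $f$ with respect to $\mathcal{B}$ (the unique remainder of $f$ on division by $\mathcal{B}$); for a monomial $x^N$ it is a monomial. *)

theory Defs
  imports Complex_Main "HOL-Library.Poly_Mapping"
begin

text \<open>Multivariate polynomials over the rationals: a monomial is an exponent vector
  (finitely supported map nat to nat) (variable 0 is x, variable i (1 \<le> i \<le> k) is y_i), and a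
  polynomial is a finitely supported map from monomials to coefficients.\<close>

type_synonym mon = "nat \<Rightarrow>\<^sub>0 nat"
type_synonym mpoly = "mon \<Rightarrow>\<^sub>0 rat"

definition Mon :: "nat \<Rightarrow> mon set" where
  "Mon n = {\<alpha>. Poly_Mapping.keys \<alpha> \<subseteq> {..<n}}"

definition Poly :: "nat \<Rightarrow> mpoly set" where
  "Poly n = {p. Poly_Mapping.keys p \<subseteq> Mon n}"

definition var :: "nat \<Rightarrow> mpoly" where
  "var i = Poly_Mapping.single (Poly_Mapping.single i 1) 1"

definition xpow :: "nat \<Rightarrow> nat \<Rightarrow> mpoly" where
  "xpow i e = Poly_Mapping.single (Poly_Mapping.single i e) 1"

definition mdvd :: "mon \<Rightarrow> mon \<Rightarrow> bool" where
  "mdvd \<alpha> \<beta> \<longleftrightarrow> (\<forall>i. Poly_Mapping.lookup \<alpha> i \<le> Poly_Mapping.lookup \<beta> i)"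

definition ideal_gen :: "nat \<Rightarrow> mpoly set \<Rightarrow> mpoly set" where
  "ideal_gen n F = {\<Sum>f\<in>F'. c f * f | F' c. finite F' \<and> F' \<subseteq> F \<and> (\<forall>f\<in>F'. c f \<in> Poly n)}"

definition monomial_order :: "nat \<Rightarrow> (mon \<Rightarrow> mon \<Rightarrow> bool) \<Rightarrow> bool" where
  "monomial_order n le \<longleftrightarrow>
     (\<forall>\<alpha>\<in>Mon n. le \<alpha> \<alpha>) \<and>
     (\<forall>\<alpha>\<in>Mon n. \<forall>\<beta>\<in>Mon n. le \<alpha> \<beta> \<and> le \<beta> \<alpha> \<longrightarrow> \<alpha> = \<beta>) \<and>
     (\<forall>\<alpha>\<in>Mon n. \<forall>\<beta>\<in>Mon n. \<forall>\<gamma>\<in>Mon n. le \<alpha> \<beta> \<and> le \<beta> \<gamma> \<longrightarrow> le \<alpha> \<gamma>) \<and>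
     (\<forall>\<alpha>\<in>Mon n. \<forall>\<beta>\<in>Mon n. le \<alpha> \<beta> \<or> le \<beta> \<alpha>) \<and>
     (\<forall>\<alpha>\<in>Mon n. \<forall>\<beta>\<in>Mon n. \<forall>\<gamma>\<in>Mon n. le \<alpha> \<beta> \<longrightarrow> le (\<alpha> + \<gamma>) (\<beta> + \<gamma>)) \<and>
     wfP (\<lambda>\<alpha> \<beta>. \<alpha> \<in> Mon n \<and> \<beta> \<in> Mon n \<and> le \<alpha> \<beta> \<and> \<alpha> \<noteq> \<beta>)"

definition elimination_order :: "nat \<Rightarrow> (mon \<Rightarrow> mon \<Rightarrow> bool) \<Rightarrow> bool" where
  "elimination_order n le \<longleftrightarrow> monomial_order n le \<and>
     (\<forall>\<alpha>\<in>Mon n. \<forall>\<beta>\<in>Mon n. Poly_Mapping.lookup \<alpha> 0 > 0 \<and> Poly_Mapping.lookup \<beta> 0 = 0 \<longrightarrow> le \<beta> \<alpha> \<and> \<beta> \<noteq> \<alpha>)"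

definition lm :: "(mon \<Rightarrow> mon \<Rightarrow> bool) \<Rightarrow> mpoly \<Rightarrow> mon" where
  "lm le p = (THE \<alpha>. \<alpha> \<in> Poly_Mapping.keys p \<and> (\<forall>\<beta>\<in>Poly_Mapping.keys p. le \<beta> \<alpha>))"

definition lc :: "(mon \<Rightarrow> mon \<Rightarrow> bool) \<Rightarrow> mpoly \<Rightarrow> rat" where
  "lc le p = Poly_Mapping.lookup p (lm le p)"

definition groebner_basis :: "nat \<Rightarrow> (mon \<Rightarrow> mon \<Rightarrow> bool) \<Rightarrow> mpoly set \<Rightarrow> mpoly set \<Rightarrow> bool" where
  "groebner_basis n le G I \<longleftrightarrow> finite G \<and> G \<subseteq> I \<and> ideal_gen n G = I \<and>
     (\<forall>f\<in>I. f \<noteq> 0 \<longrightarrow> (\<exists>g\<in>G. g \<noteq> 0 \<and> mdvd (lm le g) (lm le f)))"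

definition reduced_groebner_basis :: "nat \<Rightarrow> (mon \<Rightarrow> mon \<Rightarrow> bool) \<Rightarrow> mpoly set \<Rightarrow> mpoly set \<Rightarrow> bool" where
  "reduced_groebner_basis n le G I \<longleftrightarrow> groebner_basis n le G I \<and>
     (\<forall>g\<in>G. g \<noteq> 0 \<and> lc le g = 1 \<and>
        (\<forall>g'\<in>G - {g}. \<forall>\<alpha>\<in>Poly_Mapping.keys g. \<not> mdvd (lm le g') \<alpha>))"

definition normal_form :: "nat \<Rightarrow> (mon \<Rightarrow> mon \<Rightarrow> bool) \<Rightarrow> mpoly set \<Rightarrow> mpoly set \<Rightarrow> mpoly \<Rightarrow> mpoly" where
  "normal_form n le B I f = (THE r. r \<in> Poly n \<and> f - r \<in> I \<and>
      (\<forall>\<alpha>\<in>Poly_Mapping.keys r. \<forall>g\<in>B. \<not> mdvd (lm le g) \<alpha>))"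

definition expo :: "mpoly \<Rightarrow> mon" where
  "expo p = (THE \<alpha>. Poly_Mapping.keys p = {\<alpha>})"

definition semigroup_gen :: "nat \<Rightarrow> (nat \<Rightarrow> nat) \<Rightarrow> nat set" where
  "semigroup_gen k a = {\<Sum>i=1..k. c i * a i | c. True}"

definition toric_gens :: "nat \<Rightarrow> (nat \<Rightarrow> nat) \<Rightarrow> mpoly set" where
  "toric_gens k a = {var i - xpow 0 (a i) | i. i \<in> {1..k}}"

end

theory Submission
  imports Defs
begin

text \<open>Give x^\<sigma> the weight w(\<sigma>) = \<sigma>_0 + \<Sum> \<sigma>_i a_i, the degree of its image under
  x \<mapsto> t, y_i \<mapsto> t^a_i. The generators y_i - x^a_i are homogeneous with coefficient sum 0, so in
  every element of I the coefficients of each weight class sum to 0, and a monomial occurring in an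
  element of I has another monomial of the same weight beside it. Consequently the least monomial of
  weight N is standard (not divisible by any leading monomial of B). Since x^\<sigma> - x^w(\<sigma>) \<in> I, two
  monomials of equal weight are congruent modulo I, so there is exactly one standard monomial of
  weight N and it is the normal form of x^N. Under an elimination order, a standard monomial
  divisible by x cannot share its weight with a pure y-monomial (their difference would have a
  leading monomial divisible by x), while the weights of pure y-monomials are exactly S.\<close>

lemma lookup_mult_single_one_add:
  fixes p :: "'a::cancel_comm_monoid_add \<Rightarrow>\<^sub>0 'b::semiring_1"
  shows "Poly_Mapping.lookup (p * Poly_Mapping.single t 1) (b + t) = Poly_Mapping.lookup p b"
proof -
  have "Sum_any (\<lambda>q. (1::'b) when t = q \<and> b + t = l + q) = (1 when l = b)" for l
  proof -
    have "Sum_any (\<lambda>q. (1::'b) when t = q \<and> b + t = l + q) = Sum_any (\<lambda>q. (1 when l = b) when q = t)"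
      by (intro Sum_any.cong) (auto simp: when_def)
    then show ?thesis by simp
  qed
  then show ?thesis
    by (simp add: lookup_mult lookup_single when_mult mult_when when_when)
qed

lemma keys_mult_single_one:
  fixes p :: "'a::cancel_comm_monoid_add \<Rightarrow>\<^sub>0 'b::semiring_1"
  shows "Poly_Mapping.keys (p * Poly_Mapping.single t 1) = (\<lambda>b. b + t) ` Poly_Mapping.keys p"
proof
  show "Poly_Mapping.keys (p * Poly_Mapping.single t 1) \<subseteq> (\<lambda>b. b + t) ` Poly_Mapping.keys p"
    using keys_mult[of p "Poly_Mapping.single t 1"] by auto
  show "(\<lambda>b. b + t) ` Poly_Mapping.keys p \<subseteq> Poly_Mapping.keys (p * Poly_Mapping.single t 1)"
    by (auto simp: in_keys_iff lookup_mult_single_one_add)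
qed

lemma single_one_eq_single_one_iff:
  "Poly_Mapping.single \<alpha> (1::'b::zero_neq_one) = Poly_Mapping.single \<beta> 1 \<longleftrightarrow> \<alpha> = \<beta>"
  by (metis lookup_single_eq lookup_single_not_eq zero_neq_one)

lemma Mon_add: "\<alpha> \<in> Mon n \<Longrightarrow> \<beta> \<in> Mon n \<Longrightarrow> \<alpha> + \<beta> \<in> Mon n"
  unfolding Mon_def using keys_add[of \<alpha> \<beta>] by auto

lemma Mon_diff:
  assumes "\<alpha> \<in> Mon n"
  shows "\<alpha> - \<beta> \<in> Mon n"
proof -
  have "Poly_Mapping.keys (\<alpha> - \<beta>) \<subseteq> Poly_Mapping.keys \<alpha>"
    by (auto simp: in_keys_iff lookup_minus)
  then show ?thesis using assms unfolding Mon_def by blast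
qed

lemma Mon_single: "i < n \<Longrightarrow> Poly_Mapping.single i e \<in> Mon n"
  unfolding Mon_def by auto

lemma lookup_Mon_eq_0: "\<alpha> \<in> Mon n \<Longrightarrow> n \<le> i \<Longrightarrow> Poly_Mapping.lookup \<alpha> i = 0"
  unfolding Mon_def by (auto simp: in_keys_iff)

lemma Poly_single: "\<alpha> \<in> Mon n \<Longrightarrow> Poly_Mapping.single \<alpha> c \<in> Poly n"
  unfolding Poly_def by auto

lemma Poly_zero: "0 \<in> Poly n"
  unfolding Poly_def by auto

lemma Poly_one: "1 \<in> Poly n"
  unfolding Poly_def Mon_def by auto

lemma Poly_add: "p \<in> Poly n \<Longrightarrow> q \<in> Poly n \<Longrightarrow> p + q \<in> Poly n"
  unfolding Poly_def using keys_add[of p q] by auto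

lemma Poly_uminus: "p \<in> Poly n \<Longrightarrow> - p \<in> Poly n"
  unfolding Poly_def by simp

lemma Poly_diff: "p \<in> Poly n \<Longrightarrow> q \<in> Poly n \<Longrightarrow> p - q \<in> Poly n"
  unfolding Poly_def using keys_diff[of p q] by auto

lemma Poly_mult: "p \<in> Poly n \<Longrightarrow> q \<in> Poly n \<Longrightarrow> p * q \<in> Poly n"
  unfolding Poly_def using keys_mult[of p q] Mon_add by fastforce

lemma Poly_sum: "(\<And>x. x \<in> A \<Longrightarrow> f x \<in> Poly n) \<Longrightarrow> sum f A \<in> Poly n"
  by (induction A rule: infinite_finite_induct) (auto intro: Poly_zero Poly_add)

lemma ideal_gen_zero: "0 \<in> ideal_gen n F"
  unfolding ideal_gen_def by (intro CollectI exI[of _ "{}"]) auto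

lemma ideal_gen_base: "f \<in> F \<Longrightarrow> f \<in> ideal_gen n F"
  unfolding ideal_gen_def using Poly_one
  by (intro CollectI exI[of _ "{f}"] exI[of _ "\<lambda>_. 1"]) auto

lemma ideal_gen_add:
  assumes "p \<in> ideal_gen n F" and "q \<in> ideal_gen n F"
  shows "p + q \<in> ideal_gen n F"
proof -
  obtain F1 c1 F2 c2 where
    p: "p = (\<Sum>f\<in>F1. c1 f * f)" "finite F1" "F1 \<subseteq> F" "\<forall>f\<in>F1. c1 f \<in> Poly n" and
    q: "q = (\<Sum>f\<in>F2. c2 f * f)" "finite F2" "F2 \<subseteq> F" "\<forall>f\<in>F2. c2 f \<in> Poly n"
    using assms unfolding ideal_gen_def by blast
  define c where "c f = (if f \<in> F1 then c1 f else 0) + (if f \<in> F2 then c2 f else 0)" for f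
  have "(\<Sum>f\<in>F1 \<union> F2. c f * f) =
      (\<Sum>f\<in>F1 \<union> F2. if f \<in> F1 then c1 f * f else 0) + (\<Sum>f\<in>F1 \<union> F2. if f \<in> F2 then c2 f * f else 0)"
    unfolding c_def sum.distrib[symmetric] by (intro sum.cong) (auto simp: distrib_right)
  also have "\<dots> = p + q"
    using p q by (simp add: sum.inter_restrict[symmetric] Int_absorb1 Int_absorb2)
  finally have "p + q = (\<Sum>f\<in>F1 \<union> F2. c f * f)" ..
  moreover have "\<forall>f\<in>F1 \<union> F2. c f \<in> Poly n"
    using p q unfolding c_def by (auto intro!: Poly_add Poly_zero)
  ultimately show ?thesis
    unfolding ideal_gen_def using p q by (intro CollectI exI[of _ "F1 \<union> F2"] exI[of _ c]) auto
qed

lemma ideal_gen_mult: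
  assumes "r \<in> Poly n" and "p \<in> ideal_gen n F"
  shows "r * p \<in> ideal_gen n F"
proof -
  obtain F' c where p: "p = (\<Sum>f\<in>F'. c f * f)" "finite F'" "F' \<subseteq> F" "\<forall>f\<in>F'. c f \<in> Poly n"
    using assms(2) unfolding ideal_gen_def by blast
  then have "r * p = (\<Sum>f\<in>F'. (r * c f) * f)"
    by (simp add: sum_distrib_left mult.assoc)
  then show ?thesis
    unfolding ideal_gen_def using p assms(1)
    by (intro CollectI exI[of _ F'] exI[of _ "\<lambda>f. r * c f"]) (auto intro: Poly_mult)
qed

lemma ideal_gen_uminus: "p \<in> ideal_gen n F \<Longrightarrow> - p \<in> ideal_gen n F"
  using ideal_gen_mult[OF Poly_uminus[OF Poly_one]] by fastforce

lemma ideal_gen_diff: "p \<in> ideal_gen n F \<Longrightarrow> q \<in> ideal_gen n F \<Longrightarrow> p - q \<in> ideal_gen n F"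
  using ideal_gen_add[of p n F "- q"] ideal_gen_uminus[of q n F] by simp

lemma ideal_gen_subset_Poly: "F \<subseteq> Poly n \<Longrightarrow> ideal_gen n F \<subseteq> Poly n"
  unfolding ideal_gen_def by (auto intro!: Poly_sum Poly_mult)

lemma monomial_order_refl: "monomial_order n le \<Longrightarrow> \<alpha> \<in> Mon n \<Longrightarrow> le \<alpha> \<alpha>"
  unfolding monomial_order_def by blast

lemma monomial_order_antisym:
  "monomial_order n le \<Longrightarrow> \<alpha> \<in> Mon n \<Longrightarrow> \<beta> \<in> Mon n \<Longrightarrow> le \<alpha> \<beta> \<Longrightarrow> le \<beta> \<alpha> \<Longrightarrow> \<alpha> = \<beta>"
  unfolding monomial_order_def by blast

lemma monomial_order_trans:
  "monomial_order n le \<Longrightarrow> \<alpha> \<in> Mon n \<Longrightarrow> \<beta> \<in> Mon n \<Longrightarrow> \<gamma> \<in> Mon n \<Longrightarrow> le \<alpha> \<beta> \<Longrightarrow> le \<beta> \<gamma> \<Longrightarrow> le \<alpha> \<gamma>"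
  unfolding monomial_order_def by blast

lemma monomial_order_total: "monomial_order n le \<Longrightarrow> \<alpha> \<in> Mon n \<Longrightarrow> \<beta> \<in> Mon n \<Longrightarrow> le \<alpha> \<beta> \<or> le \<beta> \<alpha>"
  unfolding monomial_order_def by blast

lemma monomial_order_add_right:
  "monomial_order n le \<Longrightarrow> \<alpha> \<in> Mon n \<Longrightarrow> \<beta> \<in> Mon n \<Longrightarrow> \<gamma> \<in> Mon n \<Longrightarrow> le \<alpha> \<beta> \<Longrightarrow> le (\<alpha> + \<gamma>) (\<beta> + \<gamma>)"
  unfolding monomial_order_def by blast

lemma monomial_order_wfP:
  "monomial_order n le \<Longrightarrow> wfP (\<lambda>\<alpha> \<beta>. \<alpha> \<in> Mon n \<and> \<beta> \<in> Mon n \<and> le \<alpha> \<beta> \<and> \<alpha> \<noteq> \<beta>)"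
  unfolding monomial_order_def by blast

lemma monomial_order_finite_has_max:
  assumes mo: "monomial_order n le" and "finite A" "A \<noteq> {}" "A \<subseteq> Mon n"
  shows "\<exists>\<alpha>\<in>A. \<forall>\<beta>\<in>A. le \<beta> \<alpha>"
  using assms(2-4)
proof (induction A rule: finite_ne_induct)
  case (singleton x)
  then show ?case using monomial_order_refl[OF mo] by auto
next
  case (insert x F)
  then obtain \<alpha> where \<alpha>: "\<alpha> \<in> F" "\<forall>\<beta>\<in>F. le \<beta> \<alpha>" by auto
  show ?case
  proof (cases "le x \<alpha>")
    case True
    then show ?thesis using \<alpha> by auto
  next
    case False
    then have "le \<alpha> x" using monomial_order_total[OF mo, of x \<alpha>] \<alpha>(1) insert.prems by auto
    then have "\<forall>\<beta>\<in>insert x F. le \<beta> x"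
      using \<alpha> insert.prems monomial_order_refl[OF mo] monomial_order_trans[OF mo] by (metis insert_iff subsetD)
    then show ?thesis by auto
  qed
qed

lemma lm_eqI:
  assumes mo: "monomial_order n le" and "Poly_Mapping.keys p \<subseteq> Mon n"
    and "\<alpha> \<in> Poly_Mapping.keys p" and "\<forall>\<beta>\<in>Poly_Mapping.keys p. le \<beta> \<alpha>"
  shows "lm le p = \<alpha>"
  unfolding lm_def using assms monomial_order_antisym[OF mo] by (intro the_equality) blast+

lemma lm_in_keys_and_max:
  assumes mo: "monomial_order n le" and "p \<in> Poly n" and "p \<noteq> 0"
  shows "lm le p \<in> Poly_Mapping.keys p" and "\<forall>\<beta>\<in>Poly_Mapping.keys p. le \<beta> (lm le p)"
proof -
  have keys: "Poly_Mapping.keys p \<subseteq> Mon n" using assms(2) unfolding Poly_def by simp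
  obtain \<alpha> where "\<alpha> \<in> Poly_Mapping.keys p" "\<forall>\<beta>\<in>Poly_Mapping.keys p. le \<beta> \<alpha>"
    using monomial_order_finite_has_max[OF mo finite_keys _ keys] assms(3) by auto
  with lm_eqI[OF mo keys this] show "lm le p \<in> Poly_Mapping.keys p"
    and "\<forall>\<beta>\<in>Poly_Mapping.keys p. le \<beta> (lm le p)" by simp_all
qed

lemma lm_binomial:
  assumes mo: "monomial_order n le" and "\<sigma> \<in> Mon n" "\<tau> \<in> Mon n" and "le \<tau> \<sigma>" "\<tau> \<noteq> \<sigma>"
  shows "lm le (Poly_Mapping.single \<sigma> 1 - Poly_Mapping.single \<tau> 1) = \<sigma>"
proof (rule lm_eqI[OF mo])
  let ?p = "Poly_Mapping.single \<sigma> 1 - Poly_Mapping.single \<tau> (1::rat)"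
  have keys: "Poly_Mapping.keys ?p \<subseteq> {\<sigma>, \<tau>}"
    using keys_diff[of "Poly_Mapping.single \<sigma> (1::rat)" "Poly_Mapping.single \<tau> 1"] by auto
  then show "Poly_Mapping.keys ?p \<subseteq> Mon n" using assms by blast
  show "\<sigma> \<in> Poly_Mapping.keys ?p"
    using assms(5) by (simp add: in_keys_iff lookup_minus lookup_single)
  show "\<forall>\<beta>\<in>Poly_Mapping.keys ?p. le \<beta> \<sigma>"
    using keys assms(2,4) monomial_order_refl[OF mo] by blast
qed

definition is_remainder :: "nat \<Rightarrow> (mon \<Rightarrow> mon \<Rightarrow> bool) \<Rightarrow> mpoly set \<Rightarrow> mpoly set \<Rightarrow> mpoly \<Rightarrow> mpoly \<Rightarrow> bool"
  where "is_remainder n le G I f r \<longleftrightarrow> r \<in> Poly n \<and> f - r \<in> I \<and>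
    (\<forall>\<alpha>\<in>Poly_Mapping.keys r. \<forall>g\<in>G. \<not> mdvd (lm le g) \<alpha>)"

lemma is_remainder_unique:
  assumes mo: "monomial_order n le" and gb: "groebner_basis n le G I"
    and r1: "is_remainder n le G I f r1" and r2: "is_remainder n le G I f r2"
  shows "r1 = r2"
proof (rule ccontr)
  assume "r1 \<noteq> r2"
  have "r1 - r2 = (f - r2) - (f - r1)" by simp
  also have "\<dots> \<in> I"
    using gb r1 r2 ideal_gen_diff unfolding groebner_basis_def is_remainder_def by metis
  finally have "r1 - r2 \<in> I" .
  then obtain g where "g \<in> G" "mdvd (lm le g) (lm le (r1 - r2))"
    using gb \<open>r1 \<noteq> r2\<close> unfolding groebner_basis_def by auto
  moreover have "r1 - r2 \<in> Poly n" using r1 r2 Poly_diff unfolding is_remainder_def by blast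
  then have "lm le (r1 - r2) \<in> Poly_Mapping.keys r1 \<union> Poly_Mapping.keys r2"
    using lm_in_keys_and_max(1)[OF mo] keys_diff[of r1 r2] \<open>r1 \<noteq> r2\<close> by force
  ultimately show False using r1 r2 unfolding is_remainder_def by blast
qed

lemma normal_form_eqI:
  assumes "monomial_order n le" and "groebner_basis n le G I" and "is_remainder n le G I f r"
  shows "normal_form n le G I f = r"
  unfolding normal_form_def is_remainder_def[symmetric]
  using assms is_remainder_unique by (intro the_equality) blast+

section \<open>The weight grading of the toric ideal\<close>

definition toric_weight :: "nat \<Rightarrow> (nat \<Rightarrow> nat) \<Rightarrow> mon \<Rightarrow> nat" where
  "toric_weight k a \<beta> = Poly_Mapping.lookup \<beta> 0 + (\<Sum>i=1..k. Poly_Mapping.lookup \<beta> i * a i)"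

lemma toric_weight_add: "toric_weight k a (\<beta> + \<gamma>) = toric_weight k a \<beta> + toric_weight k a \<gamma>"
  unfolding toric_weight_def by (simp add: lookup_add distrib_right sum.distrib)

lemma toric_weight_single_var:
  assumes "i \<in> {1..k}"
  shows "toric_weight k a (Poly_Mapping.single i 1) = a i"
proof -
  have "(\<Sum>j=1..k. Poly_Mapping.lookup (Poly_Mapping.single i 1) j * a j) =
      (\<Sum>j=1..k. if i = j then a j else 0)"
    by (intro sum.cong) (auto simp: lookup_single)
  also have "\<dots> = a i" using assms by simp
  finally show ?thesis
    using assms unfolding toric_weight_def by (simp add: lookup_single)
qed

lemma toric_weight_single_0: "toric_weight k a (Poly_Mapping.single 0 e) = e"
  unfolding toric_weight_def by (simp add: lookup_single)

(* For w = toric_weight k a this is the coefficient of t^d in the image of p under x \<mapsto> t, y_i \<mapsto> t^a_i. *)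
definition weight_coeff_sum :: "(mon \<Rightarrow> nat) \<Rightarrow> nat \<Rightarrow> mpoly \<Rightarrow> rat" where
  "weight_coeff_sum w d p = (\<Sum>\<beta>\<in>Poly_Mapping.keys p. if w \<beta> = d then Poly_Mapping.lookup p \<beta> else 0)"

lemma weight_coeff_sum_zero [simp]: "weight_coeff_sum w d 0 = 0"
  unfolding weight_coeff_sum_def by simp

lemma weight_coeff_sum_superset:
  assumes "finite A" "Poly_Mapping.keys p \<subseteq> A"
  shows "weight_coeff_sum w d p = (\<Sum>\<beta>\<in>A. if w \<beta> = d then Poly_Mapping.lookup p \<beta> else 0)"
  unfolding weight_coeff_sum_def using assms by (intro sum.mono_neutral_left) (auto simp: in_keys_iff)

lemma weight_coeff_sum_add:
  "weight_coeff_sum w d (p + q) = weight_coeff_sum w d p + weight_coeff_sum w d q"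
proof -
  let ?A = "Poly_Mapping.keys p \<union> Poly_Mapping.keys q"
  have "finite ?A" "Poly_Mapping.keys (p + q) \<subseteq> ?A" using keys_add[of p q] by auto
  then show ?thesis
    by (simp add: weight_coeff_sum_superset[of ?A] lookup_add sum.distrib[symmetric] if_distrib cong: if_cong)
qed

lemma weight_coeff_sum_diff:
  "weight_coeff_sum w d (p - q) = weight_coeff_sum w d p - weight_coeff_sum w d q"
proof -
  have "weight_coeff_sum w d (- q) = - weight_coeff_sum w d q"
    unfolding weight_coeff_sum_def by (simp add: sum_negf[symmetric] if_distrib cong: if_cong)
  then show ?thesis using weight_coeff_sum_add[of w d p "- q"] by simp
qed

lemma weight_coeff_sum_sum: "weight_coeff_sum w d (sum f A) = (\<Sum>x\<in>A. weight_coeff_sum w d (f x))"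
  by (induction A rule: infinite_finite_induct)
    (simp_all add: weight_coeff_sum_add)

lemma weight_coeff_sum_mult_single:
  assumes "\<And>\<beta> \<gamma>. w (\<beta> + \<gamma>) = w \<beta> + w \<gamma>"
  shows "weight_coeff_sum w d (p * Poly_Mapping.single t 1) =
    (\<Sum>\<beta>\<in>Poly_Mapping.keys p. if w \<beta> + w t = d then Poly_Mapping.lookup p \<beta> else 0)"
proof -
  have "inj_on (\<lambda>\<beta>. \<beta> + t) (Poly_Mapping.keys p)" by (rule inj_onI) simp
  then show ?thesis
    unfolding weight_coeff_sum_def keys_mult_single_one
    by (simp add: sum.reindex assms) (simp only: lookup_mult_single_one_add)
qed

abbreviation toric_ideal :: "nat \<Rightarrow> (nat \<Rightarrow> nat) \<Rightarrow> mpoly set" where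
  "toric_ideal k a \<equiv> ideal_gen (k + 1) (toric_gens k a)"

lemma weight_coeff_sum_toric_ideal:
  assumes "p \<in> toric_ideal k a"
  shows "weight_coeff_sum (toric_weight k a) d p = 0"
proof -
  have gen: "weight_coeff_sum (toric_weight k a) d (c * f) = 0" if f: "f \<in> toric_gens k a" for c f
  proof -
    obtain i where i: "i \<in> {1..k}" "f = var i - xpow 0 (a i)"
      using f unfolding toric_gens_def by blast
    then have "c * f = c * Poly_Mapping.single (Poly_Mapping.single i 1) 1
        - c * Poly_Mapping.single (Poly_Mapping.single 0 (a i)) 1"
      unfolding var_def xpow_def by (simp add: right_diff_distrib)
    then show ?thesis
      using toric_weight_single_var[OF i(1)]
      by (simp add: weight_coeff_sum_diff weight_coeff_sum_mult_single toric_weight_add toric_weight_single_0)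
  qed
  obtain F c where "p = (\<Sum>f\<in>F. c f * f)" "F \<subseteq> toric_gens k a"
    using assms unfolding ideal_gen_def by blast
  then show ?thesis by (simp add: weight_coeff_sum_sum gen subsetD)
qed

lemma toric_gens_subset_Poly: "toric_gens k a \<subseteq> Poly (k + 1)"
  unfolding toric_gens_def var_def xpow_def by (auto intro!: Poly_diff Poly_single Mon_single)

lemma toric_ideal_weight_partner:
  assumes "p \<in> toric_ideal k a" and "\<beta> \<in> Poly_Mapping.keys p"
  shows "\<exists>\<beta>'\<in>Poly_Mapping.keys p. \<beta>' \<noteq> \<beta> \<and> toric_weight k a \<beta>' = toric_weight k a \<beta>"
proof (rule ccontr)
  let ?w = "toric_weight k a"
  assume "\<not> ?thesis"
  then have "(\<Sum>\<beta>'\<in>Poly_Mapping.keys p - {\<beta>}. if ?w \<beta>' = ?w \<beta> then Poly_Mapping.lookup p \<beta>' else 0) = 0"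
    by (intro sum.neutral) auto
  then have "weight_coeff_sum ?w (?w \<beta>) p = Poly_Mapping.lookup p \<beta>"
    using assms(2) unfolding weight_coeff_sum_def by (simp add: sum.remove)
  then show False
    using weight_coeff_sum_toric_ideal[OF assms(1)] assms(2) by (simp add: in_keys_iff)
qed

lemma semigroup_gen_eq_toric_weights:
  "semigroup_gen k a = {toric_weight k a \<tau> | \<tau>. \<tau> \<in> Mon (k + 1) \<and> Poly_Mapping.lookup \<tau> 0 = 0}"
proof (intro equalityI subsetI)
  fix N assume "N \<in> semigroup_gen k a"
  then obtain c where c: "N = (\<Sum>i=1..k. c i * a i)" unfolding semigroup_gen_def by blast
  define \<tau> where "\<tau> = (\<Sum>i\<in>{1..k}. Poly_Mapping.single i (c i))"
  have lookup_\<tau>: "Poly_Mapping.lookup \<tau> j = (if j \<in> {1..k} then c j else 0)" for j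
    unfolding \<tau>_def by (simp add: lookup_sum lookup_single when_def sum.delta')
  have "\<tau> \<in> Mon (k + 1)"
    unfolding Mon_def by (auto simp: in_keys_iff lookup_\<tau> split: if_splits)
  moreover have "toric_weight k a \<tau> = N"
    unfolding toric_weight_def c by (simp add: lookup_\<tau>)
  moreover have "Poly_Mapping.lookup \<tau> 0 = 0" by (simp add: lookup_\<tau>)
  ultimately show "N \<in> {toric_weight k a \<tau> | \<tau>. \<tau> \<in> Mon (k + 1) \<and> Poly_Mapping.lookup \<tau> 0 = 0}"
    by blast
qed (auto simp: semigroup_gen_def toric_weight_def)

lemma monomial_minus_xpow_mult:
  assumes "0 < n" "\<alpha> \<in> Mon n" "\<beta> \<in> Mon n"
    and "Poly_Mapping.single \<alpha> 1 - xpow 0 d \<in> ideal_gen n F"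
    and "Poly_Mapping.single \<beta> 1 - xpow 0 e \<in> ideal_gen n F"
  shows "Poly_Mapping.single (\<alpha> + \<beta>) 1 - xpow 0 (d + e) \<in> ideal_gen n F"
proof -
  have "Poly_Mapping.single (\<alpha> + \<beta>) 1 - xpow 0 (d + e) =
      Poly_Mapping.single \<alpha> 1 * (Poly_Mapping.single \<beta> 1 - xpow 0 e)
      + xpow 0 e * (Poly_Mapping.single \<alpha> 1 - xpow 0 d)"
    unfolding xpow_def by (simp add: algebra_simps mult_single single_add)
  moreover have "Poly_Mapping.single \<alpha> 1 \<in> Poly n" "xpow 0 e \<in> Poly n"
    using assms(1,2) unfolding xpow_def by (auto intro: Poly_single Mon_single)
  ultimately show ?thesis
    using assms(4,5) by (simp add: ideal_gen_add ideal_gen_mult)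
qed

lemma monomial_minus_xpow_weight_in_toric_ideal:
  "\<sigma> \<in> Mon (k + 1) \<Longrightarrow> Poly_Mapping.single \<sigma> 1 - xpow 0 (toric_weight k a \<sigma>) \<in> toric_ideal k a"
proof (induction "\<Sum>i=1..k. Poly_Mapping.lookup \<sigma> i" arbitrary: \<sigma> rule: less_induct)
  case less
  show ?case
  proof (cases "\<exists>i\<in>{1..k}. 0 < Poly_Mapping.lookup \<sigma> i")
    case False
    then have "Poly_Mapping.lookup \<sigma> j = 0" if "j \<noteq> 0" for j
      using lookup_Mon_eq_0[OF less.prems, of j] that by (cases "j \<le> k") auto
    then have "\<sigma> = Poly_Mapping.single 0 (toric_weight k a \<sigma>)"
      by (intro poly_mapping_eqI) (simp add: toric_weight_def lookup_single when_def)
    then show ?thesis by (metis xpow_def diff_self ideal_gen_zero)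
  next
    case True
    then obtain i where i: "i \<in> {1..k}" "0 < Poly_Mapping.lookup \<sigma> i" by blast
    define \<sigma>' where "\<sigma>' = \<sigma> - Poly_Mapping.single i 1"
    have lookup_\<sigma>': "Poly_Mapping.lookup \<sigma>' j = Poly_Mapping.lookup \<sigma> j - (if i = j then 1 else 0)" for j
      unfolding \<sigma>'_def by (simp add: lookup_minus lookup_single)
    have \<sigma>: "\<sigma> = \<sigma>' + Poly_Mapping.single i 1"
      using i by (intro poly_mapping_eqI) (auto simp: lookup_add lookup_\<sigma>' lookup_single)
    have \<sigma>'_Mon: "\<sigma>' \<in> Mon (k + 1)" unfolding \<sigma>'_def by (rule Mon_diff[OF less.prems])
    have "(\<Sum>j=1..k. Poly_Mapping.lookup \<sigma>' j) < (\<Sum>j=1..k. Poly_Mapping.lookup \<sigma> j)"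
      using i by (intro sum_strict_mono_ex1) (auto simp: lookup_\<sigma>')
    then have "Poly_Mapping.single \<sigma>' 1 - xpow 0 (toric_weight k a \<sigma>') \<in> toric_ideal k a"
      using less.hyps \<sigma>'_Mon by blast
    moreover have "Poly_Mapping.single (Poly_Mapping.single i 1) 1 - xpow 0 (a i) \<in> toric_ideal k a"
      using i(1) by (intro ideal_gen_base) (auto simp: toric_gens_def var_def)
    moreover have "toric_weight k a \<sigma> = toric_weight k a \<sigma>' + a i"
      using \<sigma> toric_weight_add toric_weight_single_var[OF i(1)] by metis
    ultimately show ?thesis
      using monomial_minus_xpow_mult[OF _ \<sigma>'_Mon Mon_single, of i] i(1) \<sigma> by simp
  qed
qed

lemma monomial_diff_in_toric_ideal:
  assumes "\<sigma> \<in> Mon (k + 1)" "\<tau> \<in> Mon (k + 1)" and "toric_weight k a \<tau> = toric_weight k a \<sigma>"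
  shows "Poly_Mapping.single \<sigma> 1 - Poly_Mapping.single \<tau> 1 \<in> toric_ideal k a"
proof -
  have "Poly_Mapping.single \<sigma> 1 - Poly_Mapping.single \<tau> 1 =
      (Poly_Mapping.single \<sigma> 1 - xpow 0 (toric_weight k a \<sigma>))
      - (Poly_Mapping.single \<tau> 1 - xpow 0 (toric_weight k a \<tau>))"
    using assms(3) by simp
  also have "\<dots> \<in> toric_ideal k a"
    using assms(1,2) by (intro ideal_gen_diff monomial_minus_xpow_weight_in_toric_ideal)
  finally show ?thesis .
qed

section \<open>Standard monomials of a Groebner basis of the toric ideal\<close>

locale toric_groebner_basis =
  fixes k :: nat and a :: "nat \<Rightarrow> nat" and le :: "mon \<Rightarrow> mon \<Rightarrow> bool" and B :: "mpoly set"
  assumes monomial_order: "monomial_order (k + 1) le"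
    and groebner_basis: "groebner_basis (k + 1) le B (toric_ideal k a)"
    and zero_notin: "0 \<notin> B"
begin

definition standard_monomials :: "mon set" where
  "standard_monomials = {\<sigma> \<in> Mon (k + 1). \<forall>g\<in>B. \<not> mdvd (lm le g) \<sigma>}"

lemma lm_dvd_lm_of_ideal: "f \<in> toric_ideal k a \<Longrightarrow> f \<noteq> 0 \<Longrightarrow> \<exists>g\<in>B. mdvd (lm le g) (lm le f)"
  using groebner_basis unfolding groebner_basis_def by blast

lemma lm_dvd_imp_smaller_of_same_weight:
  assumes "g \<in> B" and \<sigma>: "\<sigma> \<in> Mon (k + 1)" and "mdvd (lm le g) \<sigma>"
  shows "\<exists>\<sigma>'\<in>Mon (k + 1). le \<sigma>' \<sigma> \<and> \<sigma>' \<noteq> \<sigma> \<and> toric_weight k a \<sigma>' = toric_weight k a \<sigma>"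
proof -
  let ?L = "lm le g"
  have g_ideal: "g \<in> toric_ideal k a"
    using assms(1) groebner_basis unfolding groebner_basis_def by blast
  then have g_Poly: "g \<in> Poly (k + 1)"
    using ideal_gen_subset_Poly[OF toric_gens_subset_Poly] by blast
  then have keys_Mon: "Poly_Mapping.keys g \<subseteq> Mon (k + 1)" unfolding Poly_def by simp
  have "g \<noteq> 0" using assms(1) zero_notin by blast
  note L = lm_in_keys_and_max[OF monomial_order g_Poly this]
  obtain \<beta> where \<beta>: "\<beta> \<in> Poly_Mapping.keys g" "\<beta> \<noteq> ?L" "toric_weight k a \<beta> = toric_weight k a ?L"
    using toric_ideal_weight_partner[OF g_ideal L(1)] by blast
  define t where "t = \<sigma> - ?L"
  have \<sigma>_eq: "\<sigma> = ?L + t"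
    using assms(3) unfolding t_def mdvd_def by (intro poly_mapping_eqI) (simp add: lookup_add lookup_minus)
  have Mon: "\<beta> \<in> Mon (k + 1)" "?L \<in> Mon (k + 1)" "t \<in> Mon (k + 1)"
    using \<beta>(1) L(1) keys_Mon Mon_diff[OF \<sigma>] unfolding t_def by auto
  have "le (\<beta> + t) (?L + t)"
    using monomial_order_add_right[OF monomial_order Mon] L(2) \<beta>(1) by blast
  moreover have "\<beta> + t \<in> Mon (k + 1)"
    using Mon_add Mon by blast
  moreover have "toric_weight k a (\<beta> + t) = toric_weight k a \<sigma>"
    using \<sigma>_eq \<beta>(3) by (simp add: toric_weight_add)
  ultimately show ?thesis
    using \<sigma>_eq \<beta>(2) by (intro bexI[of _ "\<beta> + t"]) auto
qed

lemma standard_monomial_of_weight: "\<exists>\<sigma>\<in>standard_monomials. toric_weight k a \<sigma> = N"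
proof -
  let ?less = "\<lambda>\<alpha> \<beta>. \<alpha> \<in> Mon (k + 1) \<and> \<beta> \<in> Mon (k + 1) \<and> le \<alpha> \<beta> \<and> \<alpha> \<noteq> \<beta>"
  let ?Q = "{\<sigma> \<in> Mon (k + 1). toric_weight k a \<sigma> = N}"
  have "Poly_Mapping.single 0 N \<in> ?Q"
    by (simp add: Mon_single toric_weight_single_0)
  with monomial_order_wfP[OF monomial_order]
  obtain \<sigma> where \<sigma>: "\<sigma> \<in> ?Q" and minimal: "\<forall>\<sigma>'. ?less \<sigma>' \<sigma> \<longrightarrow> \<sigma>' \<notin> ?Q"
    by (rule wfp_eq_minimal[THEN iffD1, rule_format, THEN bexE])
  have "\<sigma> \<in> standard_monomials"
    using \<sigma> minimal lm_dvd_imp_smaller_of_same_weight unfolding standard_monomials_def by fastforce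
  with \<sigma> show ?thesis by blast
qed

lemma is_remainder_monomial:
  assumes "\<sigma> \<in> Mon (k + 1)" and "\<tau> \<in> standard_monomials"
    and "toric_weight k a \<tau> = toric_weight k a \<sigma>"
  shows "is_remainder (k + 1) le B (toric_ideal k a) (Poly_Mapping.single \<sigma> 1) (Poly_Mapping.single \<tau> 1)"
proof -
  have \<tau>: "\<tau> \<in> Mon (k + 1)" using assms(2) unfolding standard_monomials_def by blast
  then show ?thesis
    using assms monomial_diff_in_toric_ideal Poly_single
    unfolding is_remainder_def standard_monomials_def by auto
qed

lemma normal_form_monomial:
  assumes "\<sigma> \<in> Mon (k + 1)" and "\<tau> \<in> standard_monomials"
    and "toric_weight k a \<tau> = toric_weight k a \<sigma>"
  shows "normal_form (k + 1) le B (toric_ideal k a) (Poly_Mapping.single \<sigma> 1) = Poly_Mapping.single \<tau> 1"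
  using normal_form_eqI[OF monomial_order groebner_basis is_remainder_monomial[OF assms]] .

lemma inj_on_toric_weight_standard_monomials: "inj_on (toric_weight k a) standard_monomials"
proof (rule inj_onI)
  fix \<tau>1 \<tau>2 assume \<tau>: "\<tau>1 \<in> standard_monomials" "\<tau>2 \<in> standard_monomials"
    and weight: "toric_weight k a \<tau>1 = toric_weight k a \<tau>2"
  have \<tau>1_Mon: "\<tau>1 \<in> Mon (k + 1)" using \<tau>(1) unfolding standard_monomials_def by blast
  have "Poly_Mapping.single \<tau>1 (1::rat) = Poly_Mapping.single \<tau>2 1"
    using is_remainder_unique[OF monomial_order groebner_basis]
      is_remainder_monomial[OF \<tau>1_Mon \<tau>(1) refl] is_remainder_monomial[OF \<tau>1_Mon \<tau>(2) weight[symmetric]] .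
  then show "\<tau>1 = \<tau>2" by (simp add: single_one_eq_single_one_iff)
qed

lemma bij_betw_toric_weight_standard_monomials: "bij_betw (toric_weight k a) standard_monomials UNIV"
proof (rule bij_betw_imageI[OF inj_on_toric_weight_standard_monomials])
  show "toric_weight k a ` standard_monomials = UNIV"
    using standard_monomial_of_weight by (auto intro: image_eqI[OF sym])
qed

lemma standard_monomial_weight_in_semigroup_iff:
  assumes elim: "elimination_order (k + 1) le" and \<sigma>: "\<sigma> \<in> standard_monomials"
  shows "toric_weight k a \<sigma> \<in> semigroup_gen k a \<longleftrightarrow> Poly_Mapping.lookup \<sigma> 0 = 0"
proof
  have \<sigma>_Mon: "\<sigma> \<in> Mon (k + 1)" using \<sigma> unfolding standard_monomials_def by blast
  assume "toric_weight k a \<sigma> \<in> semigroup_gen k a"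
  then obtain \<tau> where weight: "toric_weight k a \<sigma> = toric_weight k a \<tau>"
    and \<tau>: "\<tau> \<in> Mon (k + 1)" "Poly_Mapping.lookup \<tau> 0 = 0"
    unfolding semigroup_gen_eq_toric_weights mem_Collect_eq by blast
  show "Poly_Mapping.lookup \<sigma> 0 = 0"
  proof (rule ccontr)
    let ?p = "Poly_Mapping.single \<sigma> 1 - Poly_Mapping.single \<tau> (1::rat)"
    assume "Poly_Mapping.lookup \<sigma> 0 \<noteq> 0"
    then have "le \<tau> \<sigma>" "\<tau> \<noteq> \<sigma>"
      using elim[unfolded elimination_order_def, THEN conjunct2, rule_format, OF \<sigma>_Mon \<tau>(1)] \<tau>(2)
      by simp_all
    then have "lm le ?p = \<sigma>"
      by (rule lm_binomial[OF monomial_order \<sigma>_Mon \<tau>(1)])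
    moreover have "?p \<noteq> 0"
      using \<open>\<tau> \<noteq> \<sigma>\<close> by (simp add: single_one_eq_single_one_iff)
    then have "\<exists>g\<in>B. mdvd (lm le g) (lm le ?p)"
      by (intro lm_dvd_lm_of_ideal monomial_diff_in_toric_ideal \<sigma>_Mon \<tau>(1) weight[symmetric])
    ultimately have "\<exists>g\<in>B. mdvd (lm le g) \<sigma>" by simp
    then show False using \<sigma> unfolding standard_monomials_def by blast
  qed
next
  assume "Poly_Mapping.lookup \<sigma> 0 = 0"
  then show "toric_weight k a \<sigma> \<in> semigroup_gen k a"
    using \<sigma> unfolding semigroup_gen_eq_toric_weights standard_monomials_def by blast
qed

end

theorem mainTheorem5:
  fixes k :: nat and a :: "nat \<Rightarrow> nat"
    and le :: "mon \<Rightarrow> mon \<Rightarrow> bool" and B :: "mpoly set"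
  assumes gcd: "Gcd (a ` {1..k}) = 1"
    and elim: "elimination_order (k + 1) le"
    and rgb: "reduced_groebner_basis (k + 1) le B (ideal_gen (k + 1) (toric_gens k a))"
  defines "S \<equiv> semigroup_gen k a"
    and "NB \<equiv> normal_form (k + 1) le B (ideal_gen (k + 1) (toric_gens k a))"
    and "C \<equiv> {\<sigma> \<in> Mon (k + 1). \<forall>g\<in>B. \<not> mdvd (lm le g) \<sigma>}"
  shows "(\<forall>N. \<exists>\<alpha>. Poly_Mapping.keys (NB (xpow 0 N)) = {\<alpha>})
     \<and> bij_betw (\<lambda>N. expo (NB (xpow 0 N))) (UNIV - S) (C - {\<sigma>. Poly_Mapping.lookup \<sigma> 0 = 0})
     \<and> bij_betw (\<lambda>M. expo (NB (xpow 0 M))) S (C \<inter> {\<sigma>. Poly_Mapping.lookup \<sigma> 0 = 0})"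
proof -
  interpret toric_groebner_basis k a le B
    using elim rgb unfolding elimination_order_def reduced_groebner_basis_def
    by unfold_locales blast+
  define std where "std = the_inv_into standard_monomials (toric_weight k a)"
  have std: "std N \<in> standard_monomials" "toric_weight k a (std N) = N" for N
    using bij_betw_toric_weight_standard_monomials unfolding std_def
    by (simp_all add: bij_betw_the_inv_into[THEN bij_betwE] f_the_inv_into_f_bij_betw)
  have weight_std: "std (toric_weight k a \<sigma>) = \<sigma>" if "\<sigma> \<in> standard_monomials" for \<sigma>
    using inj_on_toric_weight_standard_monomials that unfolding std_def by (rule the_inv_into_f_f)
  have NB_xpow: "NB (xpow 0 N) = Poly_Mapping.single (std N) 1" for N
    unfolding NB_def xpow_def
    using normal_form_monomial[OF Mon_single std(1)] by (simp add: toric_weight_single_0 std(2))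
  have in_S_iff: "N \<in> S \<longleftrightarrow> Poly_Mapping.lookup (std N) 0 = 0" for N
    using standard_monomial_weight_in_semigroup_iff[OF elim std(1)] unfolding S_def std(2) .
  have "(\<lambda>N. expo (NB (xpow 0 N))) = std"
    by (simp add: NB_xpow expo_def)
  moreover have "C = standard_monomials"
    unfolding C_def standard_monomials_def ..
  ultimately show ?thesis
    using std weight_std in_S_iff standard_monomial_weight_in_semigroup_iff[OF elim, folded S_def]
    by (auto simp: NB_xpow intro!: bij_betw_byWitness[where f' = "toric_weight k a"])
qed

end
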